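(* Let $n \ge 1$ and let $X = [q_{ij}] \in \{0,1\}^{n\times n}$ be any infeasible solution, i.e. a binary $n\times n$ matrix in which at least one row sum or column sum differs from $1$. Run the Bit-Flip Heuristic Algorithm (BFHA), described in the context, on input $X$, with ties broken arbitrarily. Then the algorithm terminates, and its output is a feasible solution, i.e. a binary $n\times n$ matrix all of whose row sums and column sums equal $1$ (a permutation matrix).
   Context: A solution of the assignment/QAP constraints is a binary matrix $X=[q_{ij}]\in\{0,1\}^{n\times n}$. It is feasible if $\sum_{j=1}^n q_{ij}=1$ for every $i$ and $\sum_{i=1}^n q_{ij}=1$ for every $j$ (one-hot constraints on all rows and columns). Otherwise it is infeasible. For the current matrix $X$ define the violation matrix $V=[v_{ij}]$ by $v_{ij}=\sum_{l=1}^{n} q_{il}+\sum_{k=1}^{n} q_{kj}-2$. Then $X$ is feasible if and only if $V=0$. The Bit-Flip Heuristic Algorithm (BFHA) takes $X$ as input and, as long as $V\neq 0$, repeats the following step and then recomputes $V$ for the updated $X$: (i) If some entry of $V$ is $\ge 1$, choose a position $(i,j)$ with $q_{ij}=1$ whose value $v_{ij}$ is largest among all positions with $q_{ij}=1$, and set $q_{ij}:=0$. (ii) Otherwise, if some entry of $V$ is $\le -1$, choose a position $(i,j)$ with $q_{ij}=0$ whose value $v_{ij}$ is smallest among all positions with $q_{ij}=0$, and set $q_{ij}:=1$. When $V=0$ the algorithm stops and outputs the current $X$. *)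

theory Defs
  imports Main
begin

text \<open>An n x n matrix is represented as a function nat => nat => int; only the
entries with indices i < n, j < n are relevant (indices 0..n-1 instead of 1..n).\<close>

definition rowsum :: "nat \<Rightarrow> (nat \<Rightarrow> nat \<Rightarrow> int) \<Rightarrow> nat \<Rightarrow> int" where
  "rowsum n X i = (\<Sum>l<n. X i l)"

definition colsum :: "nat \<Rightarrow> (nat \<Rightarrow> nat \<Rightarrow> int) \<Rightarrow> nat \<Rightarrow> int" where
  "colsum n X j = (\<Sum>k<n. X k j)"

definition viol :: "nat \<Rightarrow> (nat \<Rightarrow> nat \<Rightarrow> int) \<Rightarrow> nat \<Rightarrow> nat \<Rightarrow> int" where
  "viol n X i j = rowsum n X i + colsum n X j - 2"

definition binary :: "nat \<Rightarrow> (nat \<Rightarrow> nat \<Rightarrow> int) \<Rightarrow> bool" where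
  "binary n X \<longleftrightarrow> (\<forall>i<n. \<forall>j<n. X i j = 0 \<or> X i j = 1)"

definition feasible :: "nat \<Rightarrow> (nat \<Rightarrow> nat \<Rightarrow> int) \<Rightarrow> bool" where
  "feasible n X \<longleftrightarrow> binary n X \<and> (\<forall>i<n. rowsum n X i = 1) \<and> (\<forall>j<n. colsum n X j = 1)"

definition V_zero :: "nat \<Rightarrow> (nat \<Rightarrow> nat \<Rightarrow> int) \<Rightarrow> bool" where
  "V_zero n X \<longleftrightarrow> (\<forall>i<n. \<forall>j<n. viol n X i j = 0)"

definition set_entry :: "(nat \<Rightarrow> nat \<Rightarrow> int) \<Rightarrow> nat \<Rightarrow> nat \<Rightarrow> int \<Rightarrow> (nat \<Rightarrow> nat \<Rightarrow> int)" where
  "set_entry X i j c = X(i := (X i)(j := c))"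

text \<open>One step of BFHA (performed only while V \<noteq> 0), with arbitrary tie breaking:
  bfha_step n X Y holds iff Y is a possible result of one iteration on X.\<close>
definition bfha_step :: "nat \<Rightarrow> (nat \<Rightarrow> nat \<Rightarrow> int) \<Rightarrow> (nat \<Rightarrow> nat \<Rightarrow> int) \<Rightarrow> bool" where
  "bfha_step n X Y \<longleftrightarrow> \<not> V_zero n X \<and>
     ((\<exists>i<n. \<exists>j<n. viol n X i j \<ge> 1) \<and>
        (\<exists>i<n. \<exists>j<n. X i j = 1 \<and>
           (\<forall>k<n. \<forall>l<n. X k l = 1 \<longrightarrow> viol n X k l \<le> viol n X i j) \<and>
           Y = set_entry X i j 0)
      \<or>
      \<not> (\<exists>i<n. \<exists>j<n. viol n X i j \<ge> 1) \<and> (\<exists>i<n. \<exists>j<n. viol n X i j \<le> -1) \<and>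
        (\<exists>i<n. \<exists>j<n. X i j = 0 \<and>
           (\<forall>k<n. \<forall>l<n. X k l = 0 \<longrightarrow> viol n X i j \<le> viol n X k l) \<and>
           Y = set_entry X i j 1))"

end

theory Submission
  imports Defs
begin

text \<open>For a binary matrix some entry of V is positive iff some row or column contains two
ones. Phase (i) therefore deletes ones until every row and column contains at most one.
From then on the algorithm stays in phase (ii): if V \<noteq> 0, counting the ones along rows and
along columns yields an empty row a and an empty column b, so the minimal violation over the
zero entries is v_ab = -2; it is attained only at cells in an empty row and an empty column,
and filling such a cell keeps at most one one per row and column. So the number of ones
decreases in phase (i) and increases, but stays at most n, in phase (ii); this gives
termination. A terminal matrix has V = 0, and then r_i + c_j = 2 for all i, j together with
\<Sum>r_i = \<Sum>c_j forces all row and column sums to be 1.\<close>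

lemma sum_fun_upd:
  fixes f :: "'a \<Rightarrow> 'b::ab_group_add"
  assumes "finite A" "a \<in> A"
  shows "sum (f(a := c)) A = sum f A - f a + c"
  using assms by (simp add: sum.remove cong: sum.cong_simp)

lemma ex_max_on_grid:
  fixes g :: "nat \<Rightarrow> nat \<Rightarrow> 'a::linorder"
  assumes "i < n" "j < n" "P i j"
  shows "\<exists>a<n. \<exists>b<n. P a b \<and> (\<forall>k<n. \<forall>l<n. P k l \<longrightarrow> g k l \<le> g a b)"
proof -
  define S where "S = {(k, l). k < n \<and> l < n \<and> P k l}"
  have fin: "finite S" unfolding S_def by (rule finite_subset[of _ "{..<n} \<times> {..<n}"]) auto
  have "(i, j) \<in> S" using assms unfolding S_def by simp
  then have "Max (case_prod g ` S) \<in> case_prod g ` S" using fin by (intro Max_in) auto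
  then obtain a b where ab: "(a, b) \<in> S" "g a b = Max (case_prod g ` S)" by auto
  have "g k l \<le> g a b" if "(k, l) \<in> S" for k l
    unfolding ab(2) using fin that by (intro Max_ge) force+
  with ab(1) show ?thesis unfolding S_def by blast
qed

lemma ex_zero_of_sum_eq:
  fixes f g :: "nat \<Rightarrow> int"
  assumes "(\<Sum>k<n. f k) = (\<Sum>k<n. g k)"
    and "a < n" "f a = 0" "\<And>k. k < n \<Longrightarrow> f k \<le> 1"
    and "\<And>k. k < n \<Longrightarrow> g k \<ge> 0"
  shows "\<exists>k<n. g k = 0"
proof (rule ccontr)
  assume "\<not> ?thesis"
  with assms(5) have g_pos: "1 \<le> g k" if "k < n" for k
    using that by force
  have "(\<Sum>k<n. f k) < (\<Sum>k<n. 1)"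
    using assms(2-4) by (intro sum_strict_mono_ex1) force+
  also have "\<dots> \<le> (\<Sum>k<n. g k)"
    using g_pos by (intro sum_mono) auto
  finally show False using assms(1) by simp
qed

lemma set_entry_apply: "set_entry X i j c k l = (if k = i \<and> l = j then c else X k l)"
  unfolding set_entry_def by simp

lemma rowsum_set_entry:
  assumes "j < n"
  shows "rowsum n (set_entry X i j c) = (rowsum n X)(i := rowsum n X i - X i j + c)"
proof
  fix k
  show "rowsum n (set_entry X i j c) k = ((rowsum n X)(i := rowsum n X i - X i j + c)) k"
    using sum_fun_upd[of "{..<n}" j "X i" c] assms unfolding rowsum_def set_entry_def by auto
qed

lemma colsum_set_entry:
  assumes "i < n"
  shows "colsum n (set_entry X i j c) = (colsum n X)(j := colsum n X j - X i j + c)"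
proof
  fix l
  show "colsum n (set_entry X i j c) l = ((colsum n X)(j := colsum n X j - X i j + c)) l"
    using sum_fun_upd[of "{..<n}" i "\<lambda>k. X k j" c] assms
    unfolding colsum_def set_entry_apply by (auto simp: fun_upd_def)
qed

lemma binary_set_entry: "binary n X \<Longrightarrow> c = 0 \<or> c = 1 \<Longrightarrow> binary n (set_entry X i j c)"
  unfolding binary_def set_entry_apply by auto

lemma rowsum_nonneg: "binary n X \<Longrightarrow> i < n \<Longrightarrow> rowsum n X i \<ge> 0"
  unfolding rowsum_def binary_def by (rule sum_nonneg) force

lemma colsum_nonneg: "binary n X \<Longrightarrow> j < n \<Longrightarrow> colsum n X j \<ge> 0"
  unfolding colsum_def binary_def by (rule sum_nonneg) force

lemma entry_le_rowsum: "binary n X \<Longrightarrow> i < n \<Longrightarrow> j < n \<Longrightarrow> X i j \<le> rowsum n X i"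
  unfolding rowsum_def binary_def by (rule member_le_sum) force+

lemma entry_le_colsum: "binary n X \<Longrightarrow> i < n \<Longrightarrow> j < n \<Longrightarrow> X i j \<le> colsum n X j"
  unfolding colsum_def binary_def by (rule member_le_sum[where f = "\<lambda>k. X k j"]) force+

lemma rowsum_pos_imp_one:
  assumes "binary n X" "i < n" "rowsum n X i > 0"
  shows "\<exists>j<n. X i j = 1"
proof (rule ccontr)
  assume "\<not> ?thesis"
  with assms(1,2) have "\<forall>j<n. X i j = 0" unfolding binary_def by auto
  with assms(3) show False unfolding rowsum_def by simp
qed

lemma colsum_pos_imp_one:
  assumes "binary n X" "j < n" "colsum n X j > 0"
  shows "\<exists>i<n. X i j = 1"
proof (rule ccontr)
  assume "\<not> ?thesis"
  with assms(1,2) have "\<forall>i<n. X i j = 0" unfolding binary_def by auto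
  with assms(3) show False unfolding colsum_def by simp
qed

definition subpermutation :: "nat \<Rightarrow> (nat \<Rightarrow> nat \<Rightarrow> int) \<Rightarrow> bool" where
  "subpermutation n X \<longleftrightarrow> (\<forall>i<n. rowsum n X i \<le> 1) \<and> (\<forall>j<n. colsum n X j \<le> 1)"

lemma pos_viol_iff_not_subpermutation:
  assumes "binary n X"
  shows "(\<exists>i<n. \<exists>j<n. viol n X i j \<ge> 1) \<longleftrightarrow> \<not> subpermutation n X"
proof
  assume "\<exists>i<n. \<exists>j<n. viol n X i j \<ge> 1"
  then show "\<not> subpermutation n X" unfolding subpermutation_def viol_def by fastforce
next
  assume "\<not> subpermutation n X"
  then consider i where "i < n" "rowsum n X i \<ge> 2" | j where "j < n" "colsum n X j \<ge> 2"
    unfolding subpermutation_def by fastforce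
  then show "\<exists>i<n. \<exists>j<n. viol n X i j \<ge> 1"
  proof cases
    case (1 i)
    then obtain j where "j < n" "X i j = 1" using rowsum_pos_imp_one[OF assms] by fastforce
    with 1 show ?thesis using entry_le_colsum[OF assms] unfolding viol_def by fastforce
  next
    case (2 j)
    then obtain i where "i < n" "X i j = 1" using colsum_pos_imp_one[OF assms] by fastforce
    with 2 show ?thesis using entry_le_rowsum[OF assms] unfolding viol_def by fastforce
  qed
qed

definition ones :: "nat \<Rightarrow> (nat \<Rightarrow> nat \<Rightarrow> int) \<Rightarrow> int" where
  "ones n X = (\<Sum>i<n. rowsum n X i)"

lemma ones_eq_sum_colsum: "ones n X = (\<Sum>j<n. colsum n X j)"
  unfolding ones_def rowsum_def colsum_def by (rule sum.swap)

lemma ones_set_entry: "i < n \<Longrightarrow> j < n \<Longrightarrow> ones n (set_entry X i j c) = ones n X - X i j + c"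
  unfolding ones_def by (simp add: rowsum_set_entry sum_fun_upd del: fun_upd_apply)

lemma ones_nonneg: "binary n X \<Longrightarrow> ones n X \<ge> 0"
  unfolding ones_def by (rule sum_nonneg) (simp add: rowsum_nonneg)

lemma ones_le_if_subpermutation:
  assumes "subpermutation n X"
  shows "ones n X \<le> int n"
proof -
  have "ones n X \<le> (\<Sum>i<n. 1)"
    unfolding ones_def using assms unfolding subpermutation_def by (intro sum_mono) auto
  then show ?thesis by simp
qed

lemma empty_row_and_column:
  assumes "binary n X" "subpermutation n X" "\<not> V_zero n X"
  obtains a b where "a < n" "b < n" "rowsum n X a = 0" "colsum n X b = 0"
proof -
  obtain i j where ij: "i < n" "j < n" "viol n X i j \<noteq> 0"
    using assms(3) unfolding V_zero_def by blast
  with assms(2) have "rowsum n X i + colsum n X j \<le> 1"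
    unfolding subpermutation_def viol_def by force
  moreover have "rowsum n X i \<ge> 0" "colsum n X j \<ge> 0"
    using rowsum_nonneg colsum_nonneg assms(1) ij by auto
  ultimately consider "rowsum n X i = 0" | "colsum n X j = 0" by linarith
  then show ?thesis
  proof cases
    case 1
    have "\<exists>b<n. colsum n X b = 0"
      using ex_zero_of_sum_eq[of "rowsum n X" n "colsum n X" i] ones_eq_sum_colsum[of n X]
        ij(1) 1 assms(2) colsum_nonneg[OF assms(1)] unfolding ones_def subpermutation_def by blast
    with 1 ij(1) that show ?thesis by blast
  next
    case 2
    have "\<exists>a<n. rowsum n X a = 0"
      using ex_zero_of_sum_eq[of "colsum n X" n "rowsum n X" j] ones_eq_sum_colsum[of n X]
        ij(2) 2 assms(2) rowsum_nonneg[OF assms(1)] unfolding ones_def subpermutation_def by metis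
    with 2 ij(2) that show ?thesis by blast
  qed
qed

lemma min_viol_zero_entry_in_empty_lines:
  assumes "binary n X" "subpermutation n X" "\<not> V_zero n X" "i < n" "j < n"
    and min: "\<forall>k<n. \<forall>l<n. X k l = 0 \<longrightarrow> viol n X i j \<le> viol n X k l"
  shows "rowsum n X i = 0" "colsum n X j = 0"
proof -
  obtain a b where ab: "a < n" "b < n" "rowsum n X a = 0" "colsum n X b = 0"
    using empty_row_and_column[OF assms(1-3)] by blast
  then have "X a b = 0"
    using entry_le_rowsum[OF assms(1) ab(1,2)] assms(1) unfolding binary_def by force
  with min ab have "viol n X i j \<le> -2" unfolding viol_def by force
  then show "rowsum n X i = 0" "colsum n X j = 0"
    using rowsum_nonneg[OF assms(1,4)] colsum_nonneg[OF assms(1,5)] unfolding viol_def by auto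
qed

lemma subpermutation_set_entry_one:
  assumes "subpermutation n X" "i < n" "j < n" "X i j = 0" "rowsum n X i = 0" "colsum n X j = 0"
  shows "subpermutation n (set_entry X i j 1)"
  using assms unfolding subpermutation_def by (simp add: rowsum_set_entry colsum_set_entry)

lemma bfha_stepE:
  assumes "bfha_step n X Y"
  obtains (remove) i j where "i < n" "j < n" "X i j = 1" "Y = set_entry X i j 0"
      "\<exists>i<n. \<exists>j<n. viol n X i j \<ge> 1"
  | (add) i j where "i < n" "j < n" "X i j = 0" "Y = set_entry X i j 1" "\<not> V_zero n X"
      "\<not> (\<exists>i<n. \<exists>j<n. viol n X i j \<ge> 1)"
      "\<forall>k<n. \<forall>l<n. X k l = 0 \<longrightarrow> viol n X i j \<le> viol n X k l"
  using assms unfolding bfha_step_def by blast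

text \<open>Phase (i) (no subpermutation) ranks above phase (ii), where at most n ones occur.\<close>
definition potential :: "nat \<Rightarrow> (nat \<Rightarrow> nat \<Rightarrow> int) \<Rightarrow> nat" where
  "potential n X =
     nat (if subpermutation n X then int n - ones n X else int n + 1 + ones n X)"

lemma bfha_step_potential:
  assumes "binary n X" "bfha_step n X Y"
  shows "binary n Y \<and> potential n Y < potential n X"
  using assms(2)
proof (cases rule: bfha_stepE)
  case (remove i j)
  have "binary n Y" using binary_set_entry[OF assms(1)] remove(4) by simp
  moreover have "\<not> subpermutation n X"
    using remove(5) pos_viol_iff_not_subpermutation[OF assms(1)] by blast
  moreover have "ones n Y = ones n X - 1" using ones_set_entry remove(1-4) by simp
  ultimately show ?thesis
    using ones_nonneg[of n Y] ones_le_if_subpermutation[of n Y] unfolding potential_def by auto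
next
  case (add i j)
  have "binary n Y" using binary_set_entry[OF assms(1)] add(4) by simp
  moreover have sub: "subpermutation n X"
    using add(6) pos_viol_iff_not_subpermutation[OF assms(1)] by blast
  moreover have "subpermutation n Y"
    using subpermutation_set_entry_one[OF sub add(1-3)] add(4)
      min_viol_zero_entry_in_empty_lines[OF assms(1) sub add(5,1,2,7)] by simp
  moreover have "ones n Y = ones n X + 1" using ones_set_entry add(1-4) by simp
  ultimately show ?thesis
    using ones_le_if_subpermutation[of n Y] unfolding potential_def by auto
qed

lemma rtranclp_bfha_step_binary: "(bfha_step n)\<^sup>*\<^sup>* X Y \<Longrightarrow> binary n X \<Longrightarrow> binary n Y"
  by (induction rule: rtranclp_induct) (auto dest: bfha_step_potential)

lemma bfha_terminates:
  assumes "binary n X"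
  shows "\<nexists>f. f 0 = X \<and> (\<forall>k. bfha_step n (f k) (f (Suc k)))"
proof
  assume "\<exists>f. f 0 = X \<and> (\<forall>k. bfha_step n (f k) (f (Suc k)))"
  then obtain f where f0: "f 0 = X" and steps: "\<And>k. bfha_step n (f k) (f (Suc k))" by blast
  have bin: "binary n (f k)" for k
    by (induction k) (use f0 assms steps bfha_step_potential in auto)
  have "(f (Suc k), f k) \<in> measure (potential n)" for k
    using bfha_step_potential[OF bin steps] by simp
  then show False using wf_measure unfolding wf_iff_no_infinite_down_chain by blast
qed

lemma bfha_step_exists:
  assumes "binary n X" "\<not> V_zero n X"
  shows "\<exists>Y. bfha_step n X Y"
proof (cases "\<exists>i<n. \<exists>j<n. viol n X i j \<ge> 1")
  case True
  then obtain i j where ij: "i < n" "j < n" "viol n X i j \<ge> 1" by blast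
  then have "rowsum n X i > 0 \<or> colsum n X j > 0" unfolding viol_def by linarith
  then obtain a b where "a < n" "b < n" "X a b = 1"
    using rowsum_pos_imp_one[OF assms(1) ij(1)] colsum_pos_imp_one[OF assms(1) ij(2)] ij by blast
  then have "\<exists>a<n. \<exists>b<n. X a b = 1 \<and> (\<forall>k<n. \<forall>l<n. X k l = 1 \<longrightarrow> viol n X k l \<le> viol n X a b)"
    by (rule ex_max_on_grid)
  then have "\<exists>Y. (\<exists>a<n. \<exists>b<n. X a b = 1 \<and> (\<forall>k<n. \<forall>l<n. X k l = 1 \<longrightarrow> viol n X k l \<le> viol n X a b)
      \<and> Y = set_entry X a b 0)"
    by blast
  then show ?thesis using True assms(2) unfolding bfha_step_def by blast
next
  case False
  then have "subpermutation n X" using pos_viol_iff_not_subpermutation[OF assms(1)] by blast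
  then obtain a b where ab: "a < n" "b < n" "rowsum n X a = 0"
    using empty_row_and_column[OF assms(1) _ assms(2)] by blast
  then have "X a b = 0"
    using entry_le_rowsum[OF assms(1) ab(1,2)] assms(1) unfolding binary_def by force
  then have "\<exists>a<n. \<exists>b<n. X a b = 0 \<and> (\<forall>k<n. \<forall>l<n. X k l = 0 \<longrightarrow> - viol n X k l \<le> - viol n X a b)"
    using ab(1,2) by (intro ex_max_on_grid)
  then have "\<exists>Y. (\<exists>a<n. \<exists>b<n. X a b = 0 \<and> (\<forall>k<n. \<forall>l<n. X k l = 0 \<longrightarrow> viol n X a b \<le> viol n X k l)
      \<and> Y = set_entry X a b 1)"
    by auto
  moreover have "\<exists>i<n. \<exists>j<n. viol n X i j \<le> -1"
    using False assms(2) unfolding V_zero_def by force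
  ultimately show ?thesis using False assms(2) unfolding bfha_step_def by blast
qed

lemma V_zero_imp_feasible:
  assumes "binary n Y" "V_zero n Y"
  shows "feasible n Y"
proof (cases "n = 0")
  case True
  then show ?thesis using assms(1) unfolding feasible_def by simp
next
  case False
  then have "0 < n" by simp
  have sum_two: "rowsum n Y i + colsum n Y j = 2" if "i < n" "j < n" for i j
    using assms(2) that unfolding V_zero_def viol_def by force
  have row: "rowsum n Y i = 2 - colsum n Y 0" if "i < n" for i
    using sum_two[OF that \<open>0 < n\<close>] by simp
  have col: "colsum n Y j = 2 - rowsum n Y 0" if "j < n" for j
    using sum_two[OF \<open>0 < n\<close> that] by simp
  have "int n * (2 - colsum n Y 0) = ones n Y"
    unfolding ones_def using row by simp
  also have "\<dots> = int n * (2 - rowsum n Y 0)"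
    unfolding ones_eq_sum_colsum using col by simp
  finally have "rowsum n Y 0 = colsum n Y 0" using \<open>0 < n\<close> by simp
  with sum_two[OF \<open>0 < n\<close> \<open>0 < n\<close>] have "rowsum n Y 0 = 1" "colsum n Y 0 = 1" by simp_all
  then show ?thesis
    using assms(1) row col unfolding feasible_def by simp
qed

theorem theorem1:
  fixes n :: nat and X :: "nat \<Rightarrow> nat \<Rightarrow> int"
  assumes "n \<ge> 1" and "binary n X" and "\<not> feasible n X"
  shows "(\<nexists>f. f 0 = X \<and> (\<forall>k. bfha_step n (f k) (f (Suc k))))
       \<and> (\<forall>Y. (bfha_step n)\<^sup>*\<^sup>* X Y \<and> (\<nexists>Z. bfha_step n Y Z) \<longrightarrow> V_zero n Y \<and> feasible n Y)"
proof
  show "\<nexists>f. f 0 = X \<and> (\<forall>k. bfha_step n (f k) (f (Suc k)))"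
    using bfha_terminates[OF assms(2)] .
  show "\<forall>Y. (bfha_step n)\<^sup>*\<^sup>* X Y \<and> (\<nexists>Z. bfha_step n Y Z) \<longrightarrow> V_zero n Y \<and> feasible n Y"
  proof (intro allI impI)
    fix Y
    assume final: "(bfha_step n)\<^sup>*\<^sup>* X Y \<and> (\<nexists>Z. bfha_step n Y Z)"
    then have "binary n Y" using rtranclp_bfha_step_binary assms(2) by blast
    moreover from this final have "V_zero n Y" using bfha_step_exists by blast
    ultimately show "V_zero n Y \<and> feasible n Y" using V_zero_imp_feasible by blast
  qed
qed

end
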